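(* Let $\mathscr D\subset\mathbb T$ be a set whose boundary has Lebesgue measure zero and with $|\mathscr D|>0$. Fix a positive integer $N$. Then there exists a constant $C_N>0$ such that for every Riemann integrable function $\varphi:\mathbb T\to\mathbb C$, $$\limsup_{\substack{q\to\infty\\ d(q)\le N}}\frac{M_{2,\varphi}(q)}{q}\le\frac{C_N}{|\mathscr D|}\,\|\varphi\|_2^2 .$$
   Context: $\mathbb T=\mathbb R/\mathbb Z$ with Lebesgue measure $|\cdot|$; $\|\varphi\|_2$ is the $L^2(\mathbb T)$ norm. $d(q)$ is the number of positive divisors of $q$. $\mathbb Z_q^\times=\{p\in\{1,\dots,q\}:\gcd(p,q)=1\}$, $\phi(q)=|\mathbb Z_q^\times|$. $e_q(x)=e^{2\pi i x/q}$, $g_\varphi(p,q)=\sum_{h=0}^{q-1}\varphi(h/q)\,e_q(ph^2)$, and $M_{2,\varphi}(q)=\frac{1}{\phi(q)|\mathscr D|}\sum_{p\in\mathbb Z_q^\times,\ p/q\bmod1\in\mathscr D}|g_\varphi(p,q)|^2$. *)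

theory Defs
  imports "HOL-Analysis.Analysis" "HOL-Number_Theory.Number_Theory"
begin

definition riemann_integrable_on :: "(real \<Rightarrow> 'b::real_normed_vector) \<Rightarrow> real \<Rightarrow> real \<Rightarrow> bool" where
  "riemann_integrable_on f a b \<longleftrightarrow>
     (\<exists>I. \<forall>\<epsilon>>0. \<exists>\<delta>>0. \<forall>P. P tagged_division_of {a..b} \<and> (\<lambda>x. ball x \<delta>) fine P \<longrightarrow>
        norm ((\<Sum>(x,K)\<in>P. Henstock_Kurzweil_Integration.content K *\<^sub>R f x) - I) < \<epsilon>)"

definition ndiv :: "nat \<Rightarrow> nat" where
  "ndiv q = card {d. d dvd q \<and> d > 0}"

definition units_mod :: "nat \<Rightarrow> nat set" where
  "units_mod q = {p \<in> {1..q}. coprime p q}"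

definition e_q :: "nat \<Rightarrow> real \<Rightarrow> complex" where
  "e_q q x = exp (2 * of_real pi * \<i> * of_real (x / real q))"

definition gauss_phi :: "(real \<Rightarrow> complex) \<Rightarrow> nat \<Rightarrow> nat \<Rightarrow> complex" where
  "gauss_phi \<phi> p q = (\<Sum>h = 0..<q. \<phi> (real h / real q) * e_q q (real (p * h^2)))"

text \<open>\<open>D\<close> is a subset of \<open>[0,1)\<close>, representing a subset of \<open>\<real>/\<int>\<close>.\<close>
definition M2 :: "real set \<Rightarrow> (real \<Rightarrow> complex) \<Rightarrow> nat \<Rightarrow> real" where
  "M2 D \<phi> q = (1 / (real (totient q) * measure lebesgue D)) *
     (\<Sum>p \<in> {p \<in> units_mod q. frac (real p / real q) \<in> D}. (cmod (gauss_phi \<phi> p q))^2)"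

end

theory Submission
  imports Defs
begin

text \<open>Only \<open>|D| > 0\<close> matters: dropping the restriction \<open>p/q \<in> D\<close> and extending the sum to all
  \<open>p \<le> q\<close>, orthogonality of additive characters gives
  \<open>\<Sum>\<^sub>p |g(p,q)|\<^sup>2 = q \<Sum> \<phi>(h/q) \<phi>(h'/q)\<^sup>*\<close> over the pairs with \<open>h\<^sup>2 \<equiv> h'\<^sup>2 (mod q)\<close>.
  Every such pair comes from a splitting \<open>q = d \<cdot> q/d\<close> with \<open>d | h - h'\<close> and \<open>q/d | h + h'\<close>.
  For fixed \<open>d\<close> and \<open>h\<close> there are at most \<open>g = gcd d (q/d)\<close> such \<open>h'\<close>, and only when \<open>h\<close> is a
  multiple of \<open>s \<ge> g/2\<close>, where \<open>s\<^sup>2 \<le> q\<close>. Thus each divisor contributes \<open>g\<close> times a left Riemann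
  sum of \<open>|\<phi>|\<^sup>2\<close> over \<open>q/s \<ge> \<surd>q\<close> points, i.e. at most \<open>2q (\<parallel>\<phi>\<parallel>\<^sub>2\<^sup>2 + \<epsilon>)\<close> for large \<open>q\<close>.
  Summing over the \<open>d(q)\<close> divisors and using \<open>q \<le> d(q) \<cdot> totient q\<close> yields
  \<open>M\<^sub>2(q)/q \<le> 2 d(q)\<^sup>2 (\<parallel>\<phi>\<parallel>\<^sub>2\<^sup>2 + \<epsilon>) / |D|\<close>, so \<open>C\<^sub>N = 2N\<^sup>2\<close>.\<close>

section \<open>Uniform Riemann sums on the unit interval\<close>

definition unit_cell :: "nat \<Rightarrow> nat \<Rightarrow> real set" where
  "unit_cell n k = {real k / real n .. real (Suc k) / real n}"

definition uniform_division :: "nat \<Rightarrow> (nat \<Rightarrow> real) \<Rightarrow> (real \<times> real set) set" where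
  "uniform_division n t = (\<lambda>k. (t k, unit_cell n k)) ` {..<n}"

definition uniform_riemann_sum :: "(real \<Rightarrow> 'a::real_vector) \<Rightarrow> nat \<Rightarrow> (nat \<Rightarrow> real) \<Rightarrow> 'a" where
  "uniform_riemann_sum f n t = (\<Sum>k<n. (1 / real n) *\<^sub>R f (t k))"

lemma unit_cell_ends_le: "n > 0 \<Longrightarrow> real k / real n \<le> real (Suc k) / real n"
  by (simp add: divide_right_mono)

lemma left_end_in_unit_cell: "n > 0 \<Longrightarrow> real k / real n \<in> unit_cell n k"
  using unit_cell_ends_le[of n k] by (simp add: unit_cell_def)

lemma unit_cell_subset: "k < n \<Longrightarrow> unit_cell n k \<subseteq> {0..1}"
  by (auto simp: unit_cell_def divide_simps)

lemma content_unit_cell: "n > 0 \<Longrightarrow> Henstock_Kurzweil_Integration.content (unit_cell n k) = 1 / real n"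
  using unit_cell_ends_le[of n k] by (simp add: unit_cell_def diff_divide_distrib[symmetric])

lemma inj_unit_cell: "n > 0 \<Longrightarrow> inj (unit_cell n)"
  by (rule injI) (use unit_cell_ends_le in \<open>auto simp: unit_cell_def Icc_eq_Icc divide_cancel_right\<close>)

lemma unit_cells_cover:
  assumes n: "n > 0" and x: "x \<in> {0..1}"
  shows "\<exists>k<n. x \<in> unit_cell n k"
proof (cases "x = 1")
  case True
  then show ?thesis
    using n by (intro exI[of _ "n - 1"]) (simp add: unit_cell_def of_nat_diff)
next
  case False
  define k where "k = nat \<lfloor>x * n\<rfloor>"
  have "real k = of_int \<lfloor>x * n\<rfloor>" using x by (simp add: k_def)
  then have k: "real k \<le> x * n" "x * n < real k + 1" by linarith+
  moreover have "x * n < n" using x n False by auto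
  ultimately have "k < n" by linarith
  then show ?thesis using k n by (auto simp: unit_cell_def divide_simps)
qed

lemma sum_uniform_division:
  assumes "n > 0"
  shows "(\<Sum>(x, K)\<in>uniform_division n t. g x K) = (\<Sum>k<n. g (t k) (unit_cell n k))"
proof -
  have "inj_on (\<lambda>k. (t k, unit_cell n k)) {..<n}"
    using inj_unit_cell[OF assms] by (auto simp: inj_on_def dest: injD)
  then show ?thesis by (simp add: uniform_division_def sum.reindex)
qed

lemma uniform_division_tagged_division:
  assumes n: "n > 0" and t: "\<And>k. k < n \<Longrightarrow> t k \<in> unit_cell n k"
  shows "uniform_division n t tagged_division_of {0..1}"
proof (rule tagged_division_ofI)
  show "finite (uniform_division n t)" by (simp add: uniform_division_def)
  show "x \<in> K" "K \<subseteq> {0..1}" "\<exists>a b. K = cbox a b" if "(x, K) \<in> uniform_division n t" for x K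
    using that t unit_cell_subset by (auto simp: uniform_division_def) (auto simp: unit_cell_def)
  show "interior K1 \<inter> interior K2 = {}"
    if cells: "(x1, K1) \<in> uniform_division n t" "(x2, K2) \<in> uniform_division n t"
      and ne: "(x1, K1) \<noteq> (x2, K2)"
    for x1 K1 x2 K2
  proof -
    have disjoint: "interior (unit_cell n i) \<inter> interior (unit_cell n j) = {}" if "i < j" for i j
    proof -
      have "real (Suc i) / real n \<le> real j / real n" using n that by (simp add: divide_right_mono)
      then show ?thesis by (auto simp: unit_cell_def)
    qed
    obtain k1 k2 where k: "x1 = t k1" "K1 = unit_cell n k1" "x2 = t k2" "K2 = unit_cell n k2"
      using cells by (auto simp: uniform_division_def)
    have "k1 \<noteq> k2" using ne k by auto
    then consider "k1 < k2" | "k2 < k1" by linarith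
    then show ?thesis
      using disjoint[of k1 k2] disjoint[of k2 k1] k by cases (auto simp: Int_commute)
  qed
  show "\<Union> {K. \<exists>x. (x, K) \<in> uniform_division n t} = {0..1}"
  proof
    show "\<Union> {K. \<exists>x. (x, K) \<in> uniform_division n t} \<subseteq> {0..1}"
      using unit_cell_subset by (auto simp: uniform_division_def)
    show "{0..1} \<subseteq> \<Union> {K. \<exists>x. (x, K) \<in> uniform_division n t}"
    proof
      fix x :: real assume "x \<in> {0..1}"
      then obtain k where "k < n" "x \<in> unit_cell n k" using unit_cells_cover[OF n] by blast
      then show "x \<in> \<Union> {K. \<exists>x. (x, K) \<in> uniform_division n t}"
        by (auto simp: uniform_division_def)
    qed
  qed
qed

lemma uniform_division_fine:
  assumes t: "\<And>k. k < n \<Longrightarrow> t k \<in> unit_cell n k" and \<delta>: "1 / real n < \<delta>"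
  shows "(\<lambda>x. ball x \<delta>) fine uniform_division n t"
proof (rule fineI)
  fix x K assume "(x, K) \<in> uniform_division n t"
  then obtain k where k: "k < n" "x = t k" "K = unit_cell n k" by (auto simp: uniform_division_def)
  show "K \<subseteq> ball x \<delta>"
  proof
    fix y assume "y \<in> K"
    then have "\<bar>y - x\<bar> \<le> real (Suc k) / n - real k / n"
      using t[OF k(1)] k by (auto simp: unit_cell_def)
    also have "\<dots> = 1 / n" by (simp add: diff_divide_distrib[symmetric])
    finally show "y \<in> ball x \<delta>" using \<delta> by (simp add: dist_real_def abs_minus_commute)
  qed
qed

lemma riemann_integrable_on_has_integral:
  assumes "riemann_integrable_on f a b"
  shows "(f has_integral integral {a..b} f) {a..b}"
    and "\<forall>\<epsilon>>0. \<exists>\<delta>>0. \<forall>P. P tagged_division_of {a..b} \<and> (\<lambda>x. ball x \<delta>) fine P \<longrightarrow>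
           norm ((\<Sum>(x, K)\<in>P. Henstock_Kurzweil_Integration.content K *\<^sub>R f x) - integral {a..b} f) < \<epsilon>"
proof -
  obtain I where I: "\<forall>\<epsilon>>0. \<exists>\<delta>>0. \<forall>P. P tagged_division_of {a..b} \<and> (\<lambda>x. ball x \<delta>) fine P \<longrightarrow>
           norm ((\<Sum>(x, K)\<in>P. Henstock_Kurzweil_Integration.content K *\<^sub>R f x) - I) < \<epsilon>"
    using assms unfolding riemann_integrable_on_def by blast
  have "(f has_integral I) {a..b}"
    unfolding has_integral_real
  proof (intro allI impI)
    fix \<epsilon> :: real assume "\<epsilon> > 0"
    with I obtain \<delta> where "\<delta> > 0" "\<forall>P. P tagged_division_of {a..b} \<and> (\<lambda>x. ball x \<delta>) fine P \<longrightarrow>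
        norm ((\<Sum>(x, K)\<in>P. Henstock_Kurzweil_Integration.content K *\<^sub>R f x) - I) < \<epsilon>"
      by blast
    then show "\<exists>\<gamma>. gauge \<gamma> \<and> (\<forall>P. P tagged_division_of {a..b} \<and> \<gamma> fine P \<longrightarrow>
        norm ((\<Sum>(x, K)\<in>P. Henstock_Kurzweil_Integration.content K *\<^sub>R f x) - I) < \<epsilon>)"
      by (intro exI[of _ "\<lambda>x. ball x \<delta>"]) auto
  qed
  moreover from this have "integral {a..b} f = I" by (rule integral_unique)
  ultimately show "(f has_integral integral {a..b} f) {a..b}"
    and "\<forall>\<epsilon>>0. \<exists>\<delta>>0. \<forall>P. P tagged_division_of {a..b} \<and> (\<lambda>x. ball x \<delta>) fine P \<longrightarrow>
           norm ((\<Sum>(x, K)\<in>P. Henstock_Kurzweil_Integration.content K *\<^sub>R f x) - integral {a..b} f) < \<epsilon>"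
    using I by simp_all
qed

lemma uniform_riemann_sum_tendsto:
  assumes f: "riemann_integrable_on f 0 1" and \<epsilon>: "\<epsilon> > 0"
  shows "\<exists>n0>0. \<forall>n\<ge>n0. \<forall>t. (\<forall>k<n. t k \<in> unit_cell n k) \<longrightarrow>
           norm (uniform_riemann_sum f n t - integral {0..1} f) < \<epsilon>"
proof -
  obtain \<delta> where \<delta>: "\<delta> > 0" and sums: "\<forall>P. P tagged_division_of {0..1} \<and> (\<lambda>x. ball x \<delta>) fine P \<longrightarrow>
      norm ((\<Sum>(x, K)\<in>P. Henstock_Kurzweil_Integration.content K *\<^sub>R f x) - integral {0..1} f) < \<epsilon>"
    using riemann_integrable_on_has_integral(2)[OF f] \<epsilon> by blast
  define n0 where "n0 = nat \<lceil>1 / \<delta>\<rceil> + 1"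
  have "norm (uniform_riemann_sum f n t - integral {0..1} f) < \<epsilon>"
    if n: "n \<ge> n0" and t: "\<forall>k<n. t k \<in> unit_cell n k" for n t
  proof -
    have "n > 0" "1 / \<delta> < real n" using n unfolding n0_def by linarith+
    then have "1 / real n < \<delta>" using \<delta> by (simp add: field_simps)
    then show ?thesis
      using sums uniform_division_tagged_division[OF \<open>n > 0\<close>] uniform_division_fine t
      by (fastforce simp: sum_uniform_division[OF \<open>n > 0\<close>] content_unit_cell[OF \<open>n > 0\<close>]
            uniform_riemann_sum_def)
  qed
  then show ?thesis by (intro exI[of _ n0]) (auto simp: n0_def)
qed

lemma uniform_riemann_sum_cauchy:
  assumes f: "riemann_integrable_on f 0 1" and \<epsilon>: "\<epsilon> > 0"
  shows "\<exists>n0>0. \<forall>n\<ge>n0. \<forall>s t. (\<forall>k<n. s k \<in> unit_cell n k) \<and> (\<forall>k<n. t k \<in> unit_cell n k) \<longrightarrow>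
           norm (uniform_riemann_sum f n s - uniform_riemann_sum f n t) < \<epsilon>"
proof -
  obtain n0 where "n0 > 0" and close: "\<forall>n\<ge>n0. \<forall>t. (\<forall>k<n. t k \<in> unit_cell n k) \<longrightarrow>
           norm (uniform_riemann_sum f n t - integral {0..1} f) < \<epsilon> / 2"
    using uniform_riemann_sum_tendsto[OF f, of "\<epsilon> / 2"] \<epsilon> by auto
  have "norm (uniform_riemann_sum f n s - uniform_riemann_sum f n t) < \<epsilon>"
    if "n \<ge> n0" "\<forall>k<n. s k \<in> unit_cell n k" "\<forall>k<n. t k \<in> unit_cell n k" for n s t
    using close that norm_diff_triangle_less[of "uniform_riemann_sum f n s" "integral {0..1} f" "\<epsilon> / 2"
        "uniform_riemann_sum f n t" "\<epsilon> / 2"]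
    by (simp add: norm_minus_commute)
  with \<open>n0 > 0\<close> show ?thesis by blast
qed

lemma uniform_riemann_sum_update:
  assumes "k < n"
  shows "uniform_riemann_sum f n (t(k := x)) - uniform_riemann_sum f n t = (1 / real n) *\<^sub>R (f x - f (t k))"
proof -
  have "uniform_riemann_sum f n (t(k := x)) - uniform_riemann_sum f n t
      = (\<Sum>j<n. if j = k then (1 / real n) *\<^sub>R (f x - f (t k)) else 0)"
    unfolding uniform_riemann_sum_def sum_subtractf[symmetric]
    by (intro sum.cong) (auto simp: scaleR_diff_right)
  then show ?thesis using assms by simp
qed

lemma riemann_integrable_on_bounded:
  assumes f: "riemann_integrable_on f 0 1"
  shows "\<exists>B. \<forall>x\<in>{0..1}. norm (f x) \<le> B"
proof -
  obtain n where n: "n > 0" and cauchy: "\<forall>s t. (\<forall>k<n. s k \<in> unit_cell n k) \<and> (\<forall>k<n. t k \<in> unit_cell n k) \<longrightarrow>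
           norm (uniform_riemann_sum f n s - uniform_riemann_sum f n t) < 1"
    using uniform_riemann_sum_cauchy[OF f, of 1] by auto
  define left where "left k = real k / real n" for k
  have "norm (f x) \<le> real n + (\<Sum>j<n. norm (f (left j)))" if x: "x \<in> {0..1}" for x
  proof -
    obtain k where k: "k < n" "x \<in> unit_cell n k" using unit_cells_cover[OF n x] by blast
    have "\<forall>j<n. left j \<in> unit_cell n j" "\<forall>j<n. (left(k := x)) j \<in> unit_cell n j"
      using left_end_in_unit_cell[OF n] k by (auto simp: left_def)
    then have "norm (uniform_riemann_sum f n (left(k := x)) - uniform_riemann_sum f n left) < 1"
      using cauchy by blast
    then have "norm (f x - f (left k)) / real n < 1"
      by (simp only: uniform_riemann_sum_update[OF k(1)] norm_scaleR) simp
    then have "norm (f x - f (left k)) < real n" using n by (simp add: field_simps)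
    moreover have "norm (f (left k)) \<le> (\<Sum>j<n. norm (f (left j)))"
      by (rule member_le_sum) (use k in auto)
    moreover have "norm (f x) \<le> norm (f x - f (left k)) + norm (f (left k))"
      using norm_triangle_ineq[of "f x - f (left k)" "f (left k)"] by simp
    ultimately show ?thesis by linarith
  qed
  then show ?thesis by blast
qed

text \<open>Taking in each cell the tag with the larger value of \<open>l \<circ> f\<close> turns the oscillation into
  the difference of two Riemann sums.\<close>
lemma uniform_oscillation_le:
  fixes l :: "'a::real_normed_vector \<Rightarrow> real"
  assumes l: "linear l" "\<And>z. l z \<le> norm z"
    and s: "\<forall>k<n. s k \<in> unit_cell n k" and t: "\<forall>k<n. t k \<in> unit_cell n k"
    and cauchy: "\<forall>s t. (\<forall>k<n. s k \<in> unit_cell n k) \<and> (\<forall>k<n. t k \<in> unit_cell n k) \<longrightarrow>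
           norm (uniform_riemann_sum f n s - uniform_riemann_sum f n t) < \<epsilon>"
  shows "(\<Sum>k<n. \<bar>l (f (s k) - f (t k))\<bar>) / real n \<le> \<epsilon>"
proof -
  define up where "up k = (if l (f (s k) - f (t k)) \<ge> 0 then s k else t k)" for k
  define down where "down k = (if l (f (s k) - f (t k)) \<ge> 0 then t k else s k)" for k
  have "\<bar>l (f (s k) - f (t k))\<bar> = l (f (up k)) - l (f (down k))" for k
    using linear_diff[OF l(1)] by (auto simp: up_def down_def)
  then have "(\<Sum>k<n. \<bar>l (f (s k) - f (t k))\<bar>) / real n
      = l (uniform_riemann_sum f n up - uniform_riemann_sum f n down)"
    by (simp add: uniform_riemann_sum_def linear_diff[OF l(1)] linear_sum[OF l(1)]
        linear_scale[OF l(1)] sum_subtractf sum_divide_distrib diff_divide_distrib)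
  also have "\<dots> \<le> norm (uniform_riemann_sum f n up - uniform_riemann_sum f n down)" by (rule l(2))
  also have "\<dots> < \<epsilon>" using cauchy s t by (auto simp: up_def down_def)
  finally show ?thesis by simp
qed

lemma uniform_oscillation_tendsto_zero:
  fixes \<phi> :: "real \<Rightarrow> complex"
  assumes \<phi>: "riemann_integrable_on \<phi> 0 1" and \<epsilon>: "\<epsilon> > 0"
  shows "\<exists>n0>0. \<forall>n\<ge>n0. \<forall>s t. (\<forall>k<n. s k \<in> unit_cell n k) \<and> (\<forall>k<n. t k \<in> unit_cell n k) \<longrightarrow>
           (\<Sum>k<n. cmod (\<phi> (s k) - \<phi> (t k))) / real n \<le> \<epsilon>"
proof -
  obtain n0 where "n0 > 0" and cauchy: "\<forall>n\<ge>n0. \<forall>s t. (\<forall>k<n. s k \<in> unit_cell n k) \<and> (\<forall>k<n. t k \<in> unit_cell n k) \<longrightarrow>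
           norm (uniform_riemann_sum \<phi> n s - uniform_riemann_sum \<phi> n t) < \<epsilon> / 2"
    using uniform_riemann_sum_cauchy[OF \<phi>, of "\<epsilon> / 2"] \<epsilon> by auto
  have "(\<Sum>k<n. cmod (\<phi> (s k) - \<phi> (t k))) / real n \<le> \<epsilon>"
    if n: "n \<ge> n0" and s: "\<forall>k<n. s k \<in> unit_cell n k" and t: "\<forall>k<n. t k \<in> unit_cell n k" for n s t
  proof -
    have "(\<Sum>k<n. \<bar>Re (\<phi> (s k) - \<phi> (t k))\<bar>) / real n \<le> \<epsilon> / 2"
      by (rule uniform_oscillation_le[OF bounded_linear.linear[OF bounded_linear_Re] complex_Re_le_cmod s t]) (use cauchy n in blast)
    moreover have "(\<Sum>k<n. \<bar>Im (\<phi> (s k) - \<phi> (t k))\<bar>) / real n \<le> \<epsilon> / 2"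
      by (rule uniform_oscillation_le[OF bounded_linear.linear[OF bounded_linear_Im] _ s t])
        (use cauchy n abs_Im_le_cmod abs_le_D1 in blast)+
    moreover have "(\<Sum>k<n. cmod (\<phi> (s k) - \<phi> (t k))) / real n
        \<le> (\<Sum>k<n. \<bar>Re (\<phi> (s k) - \<phi> (t k))\<bar>) / real n + (\<Sum>k<n. \<bar>Im (\<phi> (s k) - \<phi> (t k))\<bar>) / real n"
      unfolding add_divide_distrib[symmetric] sum.distrib[symmetric]
      by (intro divide_right_mono sum_mono cmod_le) simp
    ultimately show ?thesis by linarith
  qed
  with \<open>n0 > 0\<close> show ?thesis by blast
qed

lemma exists_point_below_mean:
  fixes f :: "real \<Rightarrow> real"
  assumes f: "f integrable_on {a..b}" and ab: "a < b" and \<eta>: "\<eta> > 0"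
  obtains y where "y \<in> {a..b}" "(b - a) * f y \<le> integral {a..b} f + \<eta>"
proof -
  have "\<exists>y\<in>{a..b}. (b - a) * f y \<le> integral {a..b} f + \<eta>"
  proof (rule ccontr)
    assume none: "\<not> ?thesis"
    have "(integral {a..b} f + \<eta>) / (b - a) \<le> f y" if "y \<in> {a..b}" for y
    proof -
      have "integral {a..b} f + \<eta> \<le> (b - a) * f y" using none that by (meson not_le less_imp_le)
      then show ?thesis using ab by (simp add: pos_divide_le_eq mult.commute)
    qed
    then have "integral {a..b} (\<lambda>_. (integral {a..b} f + \<eta>) / (b - a)) \<le> integral {a..b} f"
      using f by (intro integral_le) auto
    then show False using ab \<eta> by simp
  qed
  with that show thesis by blast
qed

lemma exists_tags_below_integral:
  fixes f :: "real \<Rightarrow> real"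
  assumes f: "f integrable_on {0..1}" and n: "n > 0" and \<eta>: "\<eta> > 0"
  shows "\<exists>t. (\<forall>k<n. t k \<in> unit_cell n k) \<and> uniform_riemann_sum f n t \<le> integral {0..1} f + \<eta>"
proof -
  have "\<exists>y. y \<in> unit_cell n k \<and> f y / real n \<le> integral (unit_cell n k) f + \<eta> / real n"
    if k: "k < n" for k
  proof -
    have "f integrable_on {real k / real n .. real (Suc k) / real n}"
      using integrable_on_subinterval[OF f unit_cell_subset[OF k, unfolded unit_cell_def]] .
    moreover have "real k / real n < real (Suc k) / real n" using n by (simp add: divide_strict_right_mono)
    moreover have "\<eta> / real n > 0" using n \<eta> by simp
    ultimately obtain y where "y \<in> unit_cell n k"
        "(real (Suc k) / real n - real k / real n) * f y \<le> integral (unit_cell n k) f + \<eta> / real n"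
      unfolding unit_cell_def by (rule exists_point_below_mean)
    moreover have "real (Suc k) / real n - real k / real n = 1 / real n"
      by (simp add: diff_divide_distrib[symmetric])
    ultimately show ?thesis by auto
  qed
  then obtain t where t: "\<And>k. k < n \<Longrightarrow> t k \<in> unit_cell n k \<and> f (t k) / real n \<le> integral (unit_cell n k) f + \<eta> / real n"
    by metis
  have "integral {0..1} f = (\<Sum>(x, K)\<in>uniform_division n t. integral K f)"
    using integral_combine_tagged_division_topdown[of f 0 1] f uniform_division_tagged_division[OF n] t
    by (simp only: box_real(2))
  also have "\<dots> = (\<Sum>k<n. integral (unit_cell n k) f)" by (rule sum_uniform_division[OF n])
  finally have "integral {0..1} f + \<eta> = (\<Sum>k<n. integral (unit_cell n k) f + \<eta> / real n)"
    using n by (simp add: sum.distrib)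
  moreover have "uniform_riemann_sum f n t = (\<Sum>k<n. f (t k) / real n)"
    by (simp add: uniform_riemann_sum_def)
  moreover have "(\<Sum>k<n. f (t k) / real n) \<le> (\<Sum>k<n. integral (unit_cell n k) f + \<eta> / real n)"
    using t by (intro sum_mono) simp
  ultimately have "uniform_riemann_sum f n t \<le> integral {0..1} f + \<eta>" by linarith
  with t show ?thesis by blast
qed

lemma norm_power2_diff_le:
  fixes u v :: "'a::real_normed_vector"
  assumes "norm u \<le> B" "norm v \<le> B"
  shows "(norm u)^2 - (norm v)^2 \<le> 2 * B * norm (u - v)"
proof -
  have "(norm u)^2 - (norm v)^2 = (norm u - norm v) * (norm u + norm v)"
    by (simp add: power2_eq_square algebra_simps)
  also have "\<dots> \<le> \<bar>norm u - norm v\<bar> * (norm u + norm v)" by (intro mult_right_mono) auto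
  also have "\<dots> \<le> norm (u - v) * (2 * B)"
    using assms by (intro mult_mono norm_triangle_ineq3) auto
  finally show ?thesis by (simp add: mult_ac)
qed

lemma norm_power2_integrable_on:
  fixes \<phi> :: "real \<Rightarrow> complex"
  assumes \<phi>: "riemann_integrable_on \<phi> 0 1"
  shows "(\<lambda>x. (cmod (\<phi> x))^2) integrable_on {0..1}"
proof -
  obtain B where B: "\<forall>x\<in>{0..1}. cmod (\<phi> x) \<le> B" using riemann_integrable_on_bounded[OF \<phi>] by blast
  have "\<phi> integrable_on {0..1}"
    using riemann_integrable_on_has_integral(1)[OF \<phi>] by (rule has_integral_integrable)
  then have "\<phi> \<in> borel_measurable (lebesgue_on {0..1})" by (rule integrable_imp_measurable)
  then have measurable: "(\<lambda>x. (cmod (\<phi> x))^2) \<in> borel_measurable (lebesgue_on {0..1})" by measurable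
  have "(\<lambda>x. (cmod (\<phi> x))^2) absolutely_integrable_on {0..1}"
  proof (rule measurable_bounded_by_integrable_imp_absolutely_integrable[OF measurable])
    show "{0..1::real} \<in> sets lebesgue" by simp
    show "(\<lambda>_. B^2) integrable_on {0..1::real}" by (rule integrable_const_ivl)
    show "norm ((cmod (\<phi> x))^2) \<le> B^2" if "x \<in> {0..1}" for x
      using B that by (simp add: power_mono)
  qed
  then show ?thesis by (simp add: absolutely_integrable_on_def)
qed

text \<open>The left sums are compared with sums at tags where \<open>|\<phi>|\<^sup>2\<close> stays below its cell averages;
  the two tag systems differ by the oscillation of \<open>\<phi>\<close>, which tends to zero.\<close>
lemma left_riemann_sum_norm_power2_le:
  fixes \<phi> :: "real \<Rightarrow> complex"
  assumes \<phi>: "riemann_integrable_on \<phi> 0 1" and \<epsilon>: "\<epsilon> > 0"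
  shows "\<forall>\<^sub>F m in sequentially. (\<Sum>k<m. (cmod (\<phi> (real k / real m)))^2) / real m
           \<le> integral {0..1} (\<lambda>x. (cmod (\<phi> x))^2) + \<epsilon>"
proof -
  define f where "f x = (cmod (\<phi> x))^2" for x
  obtain B0 where B0: "\<forall>x\<in>{0..1}. cmod (\<phi> x) \<le> B0" using riemann_integrable_on_bounded[OF \<phi>] by blast
  define B where "B = max B0 0"
  have B: "\<And>x. x \<in> {0..1} \<Longrightarrow> cmod (\<phi> x) \<le> B" "B \<ge> 0"
    using B0 by (auto simp: B_def le_max_iff_disj)
  define \<epsilon>' where "\<epsilon>' = \<epsilon> / (2 * (2 * B + 1))"
  have "\<epsilon>' > 0" unfolding \<epsilon>'_def using \<epsilon> B(2) by simp
  obtain n0 where n0: "n0 > 0" and osc: "\<forall>n\<ge>n0. \<forall>s t. (\<forall>k<n. s k \<in> unit_cell n k) \<and> (\<forall>k<n. t k \<in> unit_cell n k) \<longrightarrow>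
           (\<Sum>k<n. cmod (\<phi> (s k) - \<phi> (t k))) / real n \<le> \<epsilon>'"
    using uniform_oscillation_tendsto_zero[OF \<phi> \<open>\<epsilon>' > 0\<close>] by blast
  have "(\<Sum>k<m. f (real k / real m)) / real m \<le> integral {0..1} f + \<epsilon>" if m: "m \<ge> n0" for m
  proof -
    have "m > 0" using m n0 by simp
    have "\<epsilon> / 2 > 0" using \<epsilon> by simp
    then obtain y where y: "\<forall>k<m. y k \<in> unit_cell m k"
        and y_below: "uniform_riemann_sum f m y \<le> integral {0..1} f + \<epsilon> / 2"
      using exists_tags_below_integral[OF norm_power2_integrable_on[OF \<phi>, folded f_def] \<open>m > 0\<close>]
      by blast
    have left: "\<forall>k<m. real k / real m \<in> unit_cell m k" using left_end_in_unit_cell[OF \<open>m > 0\<close>] by blast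
    have "f (real k / real m) - f (y k) \<le> 2 * B * cmod (\<phi> (real k / real m) - \<phi> (y k))" if "k < m" for k
      unfolding f_def using that left y unit_cell_subset[OF that] by (intro norm_power2_diff_le B) auto
    then have "(\<Sum>k<m. f (real k / real m) - f (y k)) / real m
        \<le> (\<Sum>k<m. 2 * B * cmod (\<phi> (real k / real m) - \<phi> (y k))) / real m"
      by (intro divide_right_mono sum_mono) auto
    also have "\<dots> = 2 * B * ((\<Sum>k<m. cmod (\<phi> (real k / real m) - \<phi> (y k))) / real m)"
      by (simp add: sum_distrib_left)
    also have "\<dots> \<le> 2 * B * \<epsilon>'" using osc m left y B(2) by (intro mult_left_mono) auto
    also have "\<dots> \<le> \<epsilon> / 2" using B(2) \<epsilon> by (simp add: \<epsilon>'_def field_simps)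
    finally have "(\<Sum>k<m. f (real k / real m) - f (y k)) / real m \<le> \<epsilon> / 2" .
    moreover have "(\<Sum>k<m. f (real k / real m)) / real m
        = uniform_riemann_sum f m y + (\<Sum>k<m. f (real k / real m) - f (y k)) / real m"
      by (simp add: uniform_riemann_sum_def sum_subtractf sum_divide_distrib diff_divide_distrib)
    ultimately show ?thesis using y_below by linarith
  qed
  then show ?thesis unfolding f_def eventually_sequentially by blast
qed

section \<open>The second moment of the Gauss sums\<close>

definition unit_root :: "nat \<Rightarrow> int \<Rightarrow> complex" where
  "unit_root q n = exp (2 * of_real pi * \<i> * of_int n / of_nat q)"

lemma unit_root_eq_1_iff:
  assumes q: "q > 0"
  shows "unit_root q n = 1 \<longleftrightarrow> int q dvd n"
proof
  assume "unit_root q n = 1"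
  then obtain m :: int where "Im (2 * of_real pi * \<i> * of_int n / of_nat q) = of_int (2 * m) * pi"
    unfolding unit_root_def exp_eq_1 by blast
  then have "real_of_int n = real_of_int m * real q" using q by (simp add: field_simps)
  then have "n = m * int q" by (metis of_int_eq_iff of_int_mult of_int_of_nat_eq)
  then show "int q dvd n" by simp
next
  assume "int q dvd n"
  then obtain m where m: "n = int q * m" by blast
  have "2 * of_real pi * \<i> * of_int n / of_nat q = (2 * of_int m * pi) * \<i>"
    using q by (simp add: m field_simps)
  then show "unit_root q n = 1" unfolding unit_root_def using exp_integer_2pi[of "real_of_int m"] by simp
qed

lemma unit_root_power_modulus:
  assumes q: "q > 0"
  shows "unit_root q n ^ q = 1"
proof -
  have "unit_root q n ^ q = exp (of_nat q * (2 * of_real pi * \<i> * of_int n / of_nat q))"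
    unfolding unit_root_def by (rule exp_of_nat_mult[symmetric])
  also have "of_nat q * (2 * of_real pi * \<i> * of_int n / of_nat q) = (2 * of_int n * pi) * \<i>"
    using q by (simp add: field_simps)
  also have "exp \<dots> = 1" using exp_integer_2pi[of "real_of_int n"] by simp
  finally show ?thesis .
qed

lemma sum_unit_root_powers:
  assumes q: "q > 0"
  shows "(\<Sum>p\<in>{1..q}. unit_root q n ^ p) = (if int q dvd n then of_nat q else 0)"
proof -
  have "(\<Sum>p\<in>{1..q}. unit_root q n ^ p) = unit_root q n * (\<Sum>p<q. unit_root q n ^ p)"
    using sum.atLeast1_atMost_eq[of "\<lambda>p. unit_root q n ^ p" q] by (simp add: sum_distrib_left)
  also have "\<dots> = (if int q dvd n then of_nat q else 0)"
    using unit_root_eq_1_iff[OF q, of n] unit_root_power_modulus[OF q, of n] by (simp add: sum_gp_strict)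
  finally show ?thesis .
qed

lemma e_q_mult_cnj:
  assumes q: "q > 0"
  shows "e_q q (real (p * h^2)) * cnj (e_q q (real (p * h'^2))) = unit_root q (int h^2 - int h'^2) ^ p"
proof -
  have "e_q q (real (p * h^2)) * cnj (e_q q (real (p * h'^2)))
      = exp (2 * of_real pi * \<i> * of_real (real (p * h^2) / real q)
             + cnj (2 * of_real pi * \<i> * of_real (real (p * h'^2) / real q)))"
    unfolding e_q_def by (simp only: exp_cnj exp_add[symmetric])
  also have "2 * of_real pi * \<i> * of_real (real (p * h^2) / real q)
             + cnj (2 * of_real pi * \<i> * of_real (real (p * h'^2) / real q))
      = of_nat p * (2 * of_real pi * \<i> * of_int (int h^2 - int h'^2) / of_nat q)"
    using q by (simp add: field_simps complex_eq_iff)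
  also have "exp \<dots> = unit_root q (int h^2 - int h'^2) ^ p"
    unfolding unit_root_def by (rule exp_of_nat_mult)
  finally show ?thesis .
qed

lemma sum_norm_gauss_phi_sq:
  fixes \<phi> :: "real \<Rightarrow> complex"
  assumes q: "q > 0"
  shows "complex_of_real (\<Sum>p\<in>{1..q}. (cmod (gauss_phi \<phi> p q))^2)
    = of_nat q * (\<Sum>h<q. \<Sum>h'<q. if int q dvd int h^2 - int h'^2
          then \<phi> (real h / real q) * cnj (\<phi> (real h' / real q)) else 0)"
proof -
  let ?a = "\<lambda>h. \<phi> (real h / real q)" and ?w = "\<lambda>h h'. unit_root q (int h^2 - int h'^2)"
  have "gauss_phi \<phi> p q * cnj (gauss_phi \<phi> p q) = (\<Sum>h<q. \<Sum>h'<q. ?a h * cnj (?a h') * ?w h h' ^ p)" for p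
  proof -
    have "gauss_phi \<phi> p q * cnj (gauss_phi \<phi> p q)
       = (\<Sum>h<q. ?a h * e_q q (real (p * h^2))) * (\<Sum>h'<q. cnj (?a h') * cnj (e_q q (real (p * h'^2))))"
      unfolding gauss_phi_def by (simp add: atLeast0LessThan)
    also have "\<dots> = (\<Sum>h<q. \<Sum>h'<q. ?a h * cnj (?a h') * (e_q q (real (p * h^2)) * cnj (e_q q (real (p * h'^2)))))"
      by (simp add: sum_product mult_ac)
    finally show ?thesis by (simp only: e_q_mult_cnj[OF q])
  qed
  then have "complex_of_real (\<Sum>p\<in>{1..q}. (cmod (gauss_phi \<phi> p q))^2)
      = (\<Sum>p\<in>{1..q}. \<Sum>h<q. \<Sum>h'<q. ?a h * cnj (?a h') * ?w h h' ^ p)"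
    by (simp only: of_real_sum complex_norm_square)
  also have "\<dots> = (\<Sum>h<q. \<Sum>h'<q. ?a h * cnj (?a h') * (\<Sum>p\<in>{1..q}. ?w h h' ^ p))"
    by (simp only: sum_distrib_left sum.swap[of _ "{1..q}"])
  also have "\<dots> = of_nat q * (\<Sum>h<q. \<Sum>h'<q. if int q dvd int h^2 - int h'^2
          then ?a h * cnj (?a h') else 0)"
    unfolding sum_unit_root_powers[OF q] by (simp add: sum_distrib_left if_distrib mult_ac cong: if_cong)
  finally show ?thesis .
qed

section \<open>Counting solutions of \<open>h\<^sup>2 \<equiv> h'\<^sup>2 (mod q)\<close>\<close>

lemma div_gcd_two_dvd:
  fixes g h :: nat
  assumes "g dvd 2 * h"
  shows "g div gcd g 2 dvd h"
proof (cases "even g")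
  case True
  then obtain t where "g = 2 * t" by blast
  then show ?thesis using assms by (simp add: gcd.commute)
next
  case False
  then have "coprime g 2" by (simp add: coprime_commute)
  then show ?thesis using assms coprime_dvd_mult_right_iff[of g 2 h] by simp
qed

lemma square_cong_splits:
  fixes q h h' :: nat
  assumes q: "q > 0" and cong: "int q dvd int h^2 - int h'^2"
  shows "\<exists>d. d dvd q \<and> int d dvd int h - int h' \<and> int (q div d) dvd int h + int h'"
proof -
  define x where "x = int h - int h'"
  define y where "y = int h + int h'"
  define G where "G = gcd (int q) x"
  have "G > 0" using q by (simp add: G_def)
  have "G dvd int q" "G dvd x" by (simp_all add: G_def)
  define Q where "Q = int q div G"
  define X where "X = x div G"
  have "coprime Q X" unfolding Q_def X_def G_def by (rule div_gcd_coprime) (use q in simp)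
  have "int q = G * Q" "x = G * X" using \<open>G dvd int q\<close> \<open>G dvd x\<close> by (simp_all add: Q_def X_def)
  moreover have "int h^2 - int h'^2 = x * y" by (simp add: x_def y_def power2_eq_square algebra_simps)
  ultimately have "G * Q dvd G * (X * y)" using cong by (simp add: mult.assoc)
  then have "Q dvd y" using \<open>G > 0\<close> coprime_dvd_mult_right_iff[OF \<open>coprime Q X\<close>] by simp
  moreover have "int (nat G) = G" "int (q div nat G) = Q"
    using \<open>G > 0\<close> by (simp_all add: Q_def zdiv_int)
  ultimately show ?thesis
    using \<open>G dvd int q\<close> \<open>G dvd x\<close> unfolding x_def y_def by (metis of_nat_dvd_iff)
qed

text \<open>Solutions \<open>h'\<close> for a fixed splitting \<open>q = d \<cdot> (q/d)\<close> are congruent modulo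
  \<open>lcm d (q/d) = q / gcd d (q/d)\<close>.\<close>
lemma card_split_solutions_le:
  fixes q d h :: nat
  assumes q: "q > 0" and d: "d dvd q"
  shows "card {h'. h' < q \<and> int d dvd int h - int h' \<and> int (q div d) dvd int h + int h'}
         \<le> gcd d (q div d)"
proof -
  define e where "e = q div d"
  define A where "A = {h'. h' < q \<and> int d dvd int h - int h' \<and> int e dvd int h + int h'}"
  define L where "L = lcm d e"
  have "q = d * e" using d by (simp add: e_def)
  then have "d > 0" "e > 0" using q by auto
  then have "L > 0" unfolding L_def by (rule lcm_pos_nat)
  have "gcd d e * L = d * e" unfolding L_def by (rule prod_gcd_lcm_nat[symmetric])
  then have "q = L * gcd d e" using \<open>q = d * e\<close> by (simp add: mult.commute)
  have same_mod: "h1 mod L = h2 mod L" if "h1 \<in> A" "h2 \<in> A" for h1 h2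
  proof -
    have "int d dvd (int h - int h2) - (int h - int h1)" "int e dvd (int h + int h1) - (int h + int h2)"
      using that unfolding A_def by (blast intro: dvd_diff)+
    then have "int d dvd int h1 - int h2" "int e dvd int h1 - int h2" by simp_all
    then have "lcm (int d) (int e) dvd int h1 - int h2" by (rule lcm_least)
    then have "int L dvd int h1 - int h2" by (simp only: L_def lcm_int_int_eq)
    then have "[int h1 = int h2] (mod int L)" by (simp add: cong_iff_dvd_diff)
    then have "[h1 = h2] (mod L)" by (simp only: cong_int_iff)
    then show ?thesis by (simp only: cong_def)
  qed
  have "inj_on (\<lambda>x. x div L) A"
  proof (rule inj_onI)
    fix h1 h2 assume "h1 \<in> A" "h2 \<in> A" "h1 div L = h2 div L"
    then have "h1 div L * L + h1 mod L = h2 div L * L + h2 mod L"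
      using same_mod[OF \<open>h1 \<in> A\<close> \<open>h2 \<in> A\<close>] by simp
    then show "h1 = h2" by (simp only: div_mult_mod_eq)
  qed
  moreover have "(\<lambda>x. x div L) ` A \<subseteq> {..<gcd d e}"
  proof
    fix z assume "z \<in> (\<lambda>x. x div L) ` A"
    then obtain x where "x \<in> A" "z = x div L" by blast
    then have "x < L * gcd d e" using \<open>q = L * gcd d e\<close> by (simp add: A_def)
    then show "z \<in> {..<gcd d e}"
      using \<open>L > 0\<close> \<open>z = x div L\<close> by (simp add: div_less_iff_less_mult mult.commute)
  qed
  ultimately have "card A \<le> card {..<gcd d e}" by (intro card_inj_on_le) auto
  then show ?thesis by (simp add: A_def e_def)
qed

text \<open>For the splitting \<open>q = d \<cdot> q/d\<close>, \<open>split_gcd q d\<close> divides \<open>2h\<close> whenever \<open>d | h - h'\<close>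
  and \<open>q/d | h + h'\<close>; \<open>split_step q d\<close> is it with a factor \<open>2\<close> removed, the step of the
  progression of those \<open>h\<close> that admit such an \<open>h'\<close>.\<close>
definition split_gcd :: "nat \<Rightarrow> nat \<Rightarrow> nat" where
  "split_gcd q d = gcd d (q div d)"

definition split_step :: "nat \<Rightarrow> nat \<Rightarrow> nat" where
  "split_step q d = split_gcd q d div gcd (split_gcd q d) 2"

lemma split_solution_imp_dvd:
  fixes q d h h' :: nat
  assumes "int d dvd int h - int h'" "int (q div d) dvd int h + int h'"
  shows "split_step q d dvd h"
proof -
  have "int (split_gcd q d) dvd int d" "int (split_gcd q d) dvd int (q div d)"
    unfolding of_nat_dvd_iff by (simp_all add: split_gcd_def)
  then have "int (split_gcd q d) dvd (int h - int h') + (int h + int h')"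
    using assms by (blast intro: dvd_add dvd_trans)
  then have "int (split_gcd q d) dvd int (2 * h)" by simp
  then have "split_gcd q d dvd 2 * h" by (simp only: of_nat_dvd_iff)
  then show ?thesis unfolding split_step_def by (rule div_gcd_two_dvd)
qed

lemma card_square_cong_le:
  fixes q h :: nat
  assumes q: "q > 0"
  shows "real (card {h'. h' < q \<and> int q dvd int h^2 - int h'^2})
         \<le> (\<Sum>d | d dvd q. if split_step q d dvd h then real (split_gcd q d) else 0)"
proof -
  define A where "A d = {h'. h' < q \<and> int d dvd int h - int h' \<and> int (q div d) dvd int h + int h'}" for d
  have "{h'. h' < q \<and> int q dvd int h^2 - int h'^2} \<subseteq> (\<Union>d \<in> {d. d dvd q}. A d)"
  proof
    fix h' assume "h' \<in> {h'. h' < q \<and> int q dvd int h^2 - int h'^2}"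
    then show "h' \<in> (\<Union>d \<in> {d. d dvd q}. A d)"
      using square_cong_splits[OF q, of h h'] by (auto simp: A_def)
  qed
  then have "card {h'. h' < q \<and> int q dvd int h^2 - int h'^2} \<le> card (\<Union>d \<in> {d. d dvd q}. A d)"
    using q by (intro card_mono) (auto simp: A_def)
  also have "\<dots> \<le> (\<Sum>d | d dvd q. card (A d))" by (rule card_UN_le) (use q in simp)
  finally have "real (card {h'. h' < q \<and> int q dvd int h^2 - int h'^2}) \<le> (\<Sum>d | d dvd q. real (card (A d)))"
    by (simp flip: of_nat_sum)
  also have "\<dots> \<le> (\<Sum>d | d dvd q. if split_step q d dvd h then real (split_gcd q d) else 0)"
  proof (rule sum_mono)
    fix d assume "d \<in> {d. d dvd q}"
    then have "card (A d) \<le> split_gcd q d"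
      unfolding A_def split_gcd_def by (intro card_split_solutions_le q) simp
    moreover have "A d = {}" if "\<not> split_step q d dvd h"
      using that split_solution_imp_dvd by (auto simp: A_def)
    ultimately show "real (card (A d)) \<le> (if split_step q d dvd h then real (split_gcd q d) else 0)"
      by auto
  qed
  finally show ?thesis .
qed

lemma split_gcd_le_twice_step: "split_gcd q d \<le> 2 * split_step q d"
proof -
  have "split_gcd q d = gcd (split_gcd q d) 2 * split_step q d"
    by (simp add: split_step_def)
  moreover have "gcd (split_gcd q d) 2 \<le> 2" by (rule dvd_imp_le) auto
  ultimately show ?thesis by (metis mult_le_mono1)
qed

lemma split_step_dvd_split_gcd: "split_step q d dvd split_gcd q d"
  by (simp add: split_step_def div_dvd_iff_mult)

lemma split_step_dvd:
  assumes "d dvd q"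
  shows "split_step q d dvd q"
proof -
  have "split_gcd q d dvd q" using assms by (auto simp: split_gcd_def intro: dvd_trans)
  with split_step_dvd_split_gcd show ?thesis by (rule dvd_trans)
qed

lemma le_square_div_split_step:
  assumes q: "q > 0" and d: "d dvd q"
  shows "q \<le> (q div split_step q d) * (q div split_step q d)"
proof -
  define s where "s = split_step q d"
  define m where "m = q div s"
  have "split_gcd q d * split_gcd q d dvd d * (q div d)"
    unfolding split_gcd_def by (intro mult_dvd_mono) auto
  then have "split_gcd q d * split_gcd q d \<le> q" using q d by (intro dvd_imp_le) auto
  moreover have "s \<le> split_gcd q d"
    using d q split_step_dvd_split_gcd by (intro dvd_imp_le) (auto simp: s_def split_gcd_def)
  ultimately have "s * s \<le> q" by (meson le_trans mult_le_mono)
  moreover have "s * m = q" using split_step_dvd[OF d] by (simp add: s_def m_def)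
  ultimately have "s * s \<le> s * m" by simp
  then have "s \<le> m" by (cases "s = 0") (auto simp: mult_le_cancel1)
  then show ?thesis using \<open>s * m = q\<close> mult_le_mono1[of s m m] by (simp add: m_def s_def)
qed

lemma sum_sym_pairs_le:
  fixes a :: "nat \<Rightarrow> real" and C :: "nat \<Rightarrow> nat \<Rightarrow> bool"
  assumes sym: "\<And>x y. C x y = C y x"
  shows "(\<Sum>h<q. \<Sum>h'<q. if C h h' then a h * a h' else 0)
         \<le> (\<Sum>h<q. (a h)^2 * real (card {h'. h' < q \<and> C h h'}))"
proof -
  let ?half = "\<lambda>h h'. if C h h' then (a h)^2 / 2 else 0"
  have "(\<Sum>h<q. \<Sum>h'<q. if C h h' then a h * a h' else 0) \<le> (\<Sum>h<q. \<Sum>h'<q. ?half h h' + ?half h' h)"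
  proof (intro sum_mono)
    fix h h'
    have "a h * a h' \<le> ((a h)^2 + (a h')^2) / 2" using sum_squares_ge_zero[of "a h - a h'" 0]
      by (simp add: power2_eq_square algebra_simps)
    then show "(if C h h' then a h * a h' else 0) \<le> ?half h h' + ?half h' h"
      using sym[of h' h] by (simp add: add_divide_distrib)
  qed
  also have "\<dots> = (\<Sum>h<q. \<Sum>h'<q. ?half h h') + (\<Sum>h<q. \<Sum>h'<q. ?half h' h)"
    by (simp only: sum.distrib)
  also have "(\<Sum>h<q. \<Sum>h'<q. ?half h' h) = (\<Sum>h<q. \<Sum>h'<q. ?half h h')"
    by (rule sum.swap)
  also have "(\<Sum>h<q. \<Sum>h'<q. ?half h h') + (\<Sum>h<q. \<Sum>h'<q. ?half h h') = 2 * (\<Sum>h<q. \<Sum>h'<q. ?half h h')"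
    by simp
  also have "\<dots> = (\<Sum>h<q. (a h)^2 * real (card {h'. h' < q \<and> C h h'}))"
    by (simp add: sum_distrib_left sum.If_cases Collect_conj_eq Int_commute lessThan_def mult.commute)
  finally show ?thesis .
qed

lemma sum_norm_gauss_phi_sq_le_count:
  fixes \<phi> :: "real \<Rightarrow> complex"
  assumes q: "q > 0"
  shows "(\<Sum>p\<in>{1..q}. (cmod (gauss_phi \<phi> p q))^2)
    \<le> real q * (\<Sum>h<q. (cmod (\<phi> (real h / real q)))^2 * real (card {h'. h' < q \<and> int q dvd int h^2 - int h'^2}))"
proof -
  define a where "a h = \<phi> (real h / real q)" for h
  define C where "C h h' \<longleftrightarrow> int q dvd int h^2 - int h'^2" for h h'
  have sym: "C h h' = C h' h" for h h'
    unfolding C_def by (metis dvd_minus_iff minus_diff_eq)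
  let ?S = "\<Sum>p\<in>{1..q}. (cmod (gauss_phi \<phi> p q))^2"
  have "?S \<ge> 0" by (simp add: sum_nonneg)
  then have "?S = cmod (complex_of_real ?S)" by (simp only: norm_of_real abs_of_nonneg)
  also have "\<dots> = real q * cmod (\<Sum>h<q. \<Sum>h'<q. if C h h' then a h * cnj (a h') else 0)"
    by (simp only: sum_norm_gauss_phi_sq[OF q] a_def C_def norm_mult norm_of_nat)
  also have "\<dots> \<le> real q * (\<Sum>h<q. \<Sum>h'<q. if C h h' then cmod (a h) * cmod (a h') else 0)"
  proof (rule mult_left_mono)
    have "cmod (\<Sum>h<q. \<Sum>h'<q. if C h h' then a h * cnj (a h') else 0)
        \<le> (\<Sum>h<q. \<Sum>h'<q. cmod (if C h h' then a h * cnj (a h') else 0))"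
      by (intro order_trans[OF norm_sum] sum_mono norm_sum)
    then show "cmod (\<Sum>h<q. \<Sum>h'<q. if C h h' then a h * cnj (a h') else 0)
        \<le> (\<Sum>h<q. \<Sum>h'<q. if C h h' then cmod (a h) * cmod (a h') else 0)"
      by (simp add: norm_mult if_distrib cong: if_cong)
  qed simp
  also have "\<dots> \<le> real q * (\<Sum>h<q. (cmod (a h))^2 * real (card {h'. h' < q \<and> C h h'}))"
    by (intro mult_left_mono sum_sym_pairs_le sym) simp
  finally show ?thesis by (simp add: a_def C_def)
qed

lemma sum_weighted_square_cong_count_le:
  fixes a :: "nat \<Rightarrow> real"
  assumes q: "q > 0" and a: "\<And>h. a h \<ge> 0"
  shows "(\<Sum>h<q. a h * real (card {h'. h' < q \<and> int q dvd int h^2 - int h'^2}))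
    \<le> (\<Sum>d | d dvd q. real (split_gcd q d) * (\<Sum>h | h < q \<and> split_step q d dvd h. a h))"
proof -
  have "(\<Sum>h<q. a h * real (card {h'. h' < q \<and> int q dvd int h^2 - int h'^2}))
      \<le> (\<Sum>h<q. a h * (\<Sum>d | d dvd q. if split_step q d dvd h then real (split_gcd q d) else 0))"
    by (intro sum_mono mult_left_mono card_square_cong_le q a)
  also have "\<dots> = (\<Sum>h<q. \<Sum>d | d dvd q. if split_step q d dvd h then real (split_gcd q d) * a h else 0)"
    by (simp add: sum_distrib_left if_distrib mult.commute cong: if_cong)
  also have "\<dots> = (\<Sum>d | d dvd q. \<Sum>h<q. if split_step q d dvd h then real (split_gcd q d) * a h else 0)"
    by (rule sum.swap)
  also have "\<dots> = (\<Sum>d | d dvd q. real (split_gcd q d) * (\<Sum>h | h < q \<and> split_step q d dvd h. a h))"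
    by (simp add: sum.If_cases sum_distrib_left Collect_conj_eq Int_commute lessThan_def)
  finally show ?thesis .
qed

lemma sum_multiples_eq_grid_sum:
  fixes f :: "real \<Rightarrow> real"
  assumes s: "s > 0" "s dvd q"
  shows "(\<Sum>h | h < q \<and> s dvd h. f (real h / real q)) = (\<Sum>k<q div s. f (real k / real (q div s)))"
proof -
  define m where "m = q div s"
  have q: "q = m * s" using s by (simp add: m_def)
  have "{h. h < q \<and> s dvd h} = (\<lambda>k. k * s) ` {..<m}"
    using s by (auto simp: q mult.commute elim!: dvdE)
  moreover have "inj_on (\<lambda>k. k * s) {..<m}" using s by (auto simp: inj_on_def)
  ultimately have "(\<Sum>h | h < q \<and> s dvd h. f (real h / real q)) = (\<Sum>k<m. f (real (k * s) / real q))"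
    by (simp add: sum.reindex)
  also have "\<dots> = (\<Sum>k<m. f (real k / real m))"
    using s by (intro sum.cong refl) (simp add: q)
  finally show ?thesis by (simp add: m_def)
qed

lemma split_term_le:
  fixes f :: "real \<Rightarrow> real"
  assumes q: "q > 0" and d: "d dvd q" and f: "\<And>x. f x \<ge> 0"
    and T: "\<And>m. q \<le> m * m \<Longrightarrow> (\<Sum>k<m. f (real k / real m)) / real m \<le> T"
  shows "real (split_gcd q d) * (\<Sum>h | h < q \<and> split_step q d dvd h. f (real h / real q)) \<le> 2 * real q * T"
proof -
  define s where "s = split_step q d"
  define m where "m = q div s"
  have "s dvd q" using split_step_dvd[OF d] by (simp add: s_def)
  then have "s > 0" "s * m = q" using q by (auto simp: m_def)
  have "q \<le> m * m" using le_square_div_split_step[OF q d] by (simp add: s_def m_def)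
  then have "m > 0" using q by (cases m) auto
  define avg where "avg = (\<Sum>k<m. f (real k / real m)) / real m"
  have "avg \<le> T" using T[OF \<open>q \<le> m * m\<close>] by (simp add: avg_def)
  moreover have "avg \<ge> 0" using f by (simp add: avg_def sum_nonneg)
  moreover have "real (split_gcd q d) \<le> 2 * real s"
    using split_gcd_le_twice_step[of q d] by (simp add: s_def)
  ultimately have bound: "real (split_gcd q d) * (real m * avg) \<le> 2 * real s * (real m * T)"
    by (intro mult_mono) auto
  have "(\<Sum>h | h < q \<and> s dvd h. f (real h / real q)) = real m * avg"
    using sum_multiples_eq_grid_sum[OF \<open>s > 0\<close> \<open>s dvd q\<close>] \<open>m > 0\<close> by (simp add: avg_def m_def)
  then have "real (split_gcd q d) * (\<Sum>h | h < q \<and> s dvd h. f (real h / real q))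
      \<le> 2 * real s * (real m * T)"
    using bound by simp
  also have "\<dots> = 2 * real q * T"
    using \<open>s * m = q\<close> by (metis mult.assoc mult.left_commute of_nat_mult)
  finally show ?thesis by (simp add: s_def)
qed

lemma ndiv_eq_card_divisors: "q > 0 \<Longrightarrow> ndiv q = card {d. d dvd q}"
  unfolding ndiv_def by (metis (lifting) dvd_pos_nat)

lemma sum_norm_gauss_phi_sq_le:
  fixes \<phi> :: "real \<Rightarrow> complex"
  assumes q: "q > 0"
    and T: "\<And>m. q \<le> m * m \<Longrightarrow> (\<Sum>k<m. (cmod (\<phi> (real k / real m)))^2) / real m \<le> T"
  shows "(\<Sum>p\<in>{1..q}. (cmod (gauss_phi \<phi> p q))^2) \<le> 2 * (real q)^2 * real (ndiv q) * T"
proof -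
  let ?f = "\<lambda>x. (cmod (\<phi> x))^2"
  have "(\<Sum>p\<in>{1..q}. (cmod (gauss_phi \<phi> p q))^2)
      \<le> real q * (\<Sum>h<q. ?f (real h / real q) * real (card {h'. h' < q \<and> int q dvd int h^2 - int h'^2}))"
    by (rule sum_norm_gauss_phi_sq_le_count[OF q])
  also have "\<dots> \<le> real q * (\<Sum>d | d dvd q. real (split_gcd q d) * (\<Sum>h | h < q \<and> split_step q d dvd h. ?f (real h / real q)))"
    by (intro mult_left_mono sum_weighted_square_cong_count_le q) auto
  also have "\<dots> \<le> real q * (\<Sum>d | d dvd q. 2 * real q * T)"
    by (intro mult_left_mono sum_mono split_term_le[OF q _ _ T]) auto
  also have "\<dots> = 2 * (real q)^2 * real (ndiv q) * T"
    by (simp add: ndiv_eq_card_divisors[OF q] power2_eq_square)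
  finally show ?thesis .
qed

lemma le_ndiv_mult_totient:
  assumes q: "q > 0"
  shows "q \<le> ndiv q * totient q"
proof -
  have "q = (\<Sum>d | d dvd q. totient d)" by (simp add: totient_divisor_sum)
  also have "\<dots> \<le> (\<Sum>d | d dvd q. totient q)"
    by (intro sum_mono totient_dvd_mono) (use q in auto)
  also have "\<dots> = ndiv q * totient q" by (simp add: ndiv_eq_card_divisors[OF q])
  finally show ?thesis .
qed

lemma M2_div_le:
  fixes \<phi> :: "real \<Rightarrow> complex"
  assumes q: "q > 0" and D: "measure lebesgue D > 0" and N: "ndiv q \<le> N"
    and T: "\<And>m. q \<le> m * m \<Longrightarrow> (\<Sum>k<m. (cmod (\<phi> (real k / real m)))^2) / real m \<le> T"
  shows "M2 D \<phi> q / real q \<le> 2 * (real N)^2 * T / measure lebesgue D"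
proof -
  define \<mu> where "\<mu> = measure lebesgue D"
  define t where "t = totient q"
  define n where "n = ndiv q"
  have "t > 0" using q by (simp add: t_def)
  have "0 \<le> (\<Sum>k<q. (cmod (\<phi> (real k / real q)))^2) / real q" by (simp add: sum_nonneg)
  also have "\<dots> \<le> T" using q by (intro T) simp
  finally have "T \<ge> 0" .
  have "(\<Sum>p \<in> {p \<in> units_mod q. frac (real p / real q) \<in> D}. (cmod (gauss_phi \<phi> p q))^2)
      \<le> (\<Sum>p\<in>{1..q}. (cmod (gauss_phi \<phi> p q))^2)"
    by (rule sum_mono2) (auto simp: units_mod_def)
  also have "\<dots> \<le> 2 * (real q)^2 * real n * T"
    unfolding n_def by (rule sum_norm_gauss_phi_sq_le[OF q T])
  finally have "M2 D \<phi> q / real q \<le> 2 * (real q)^2 * real n * T / (real t * \<mu> * real q)"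
    using q D \<open>t > 0\<close> by (simp add: M2_def t_def \<mu>_def divide_right_mono)
  also have "\<dots> = (2 * T / \<mu>) * (real (q * n) / real t)"
    using q by (simp add: power2_eq_square field_simps)
  also have "\<dots> \<le> (2 * T / \<mu>) * (real (N * t * N) / real t)"
  proof -
    have "q * n \<le> n * t * n" using le_ndiv_mult_totient[OF q] by (simp add: n_def t_def)
    also have "\<dots> \<le> N * t * N" using N by (simp add: n_def mult_le_mono)
    finally have "real (q * n) \<le> real (N * t * N)" by (simp only: of_nat_le_iff)
    then show ?thesis
      using \<open>T \<ge> 0\<close> D \<open>t > 0\<close> by (intro mult_left_mono divide_right_mono) (auto simp: \<mu>_def)
  qed
  also have "\<dots> = 2 * (real N)^2 * T / \<mu>" using \<open>t > 0\<close> by (simp add: power2_eq_square field_simps)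
  finally show ?thesis by (simp add: \<mu>_def)
qed

lemma Limsup_le_if_eventually_le:
  fixes f :: "'a \<Rightarrow> real"
  assumes "\<And>\<epsilon>. \<epsilon> > 0 \<Longrightarrow> \<forall>\<^sub>F x in F. f x \<le> c + \<epsilon>"
  shows "Limsup F (\<lambda>x. ereal (f x)) \<le> ereal c"
proof (rule ereal_le_epsilon2)
  fix \<epsilon> :: real assume "\<epsilon> > 0"
  then have "\<forall>\<^sub>F x in F. ereal (f x) \<le> ereal c + ereal \<epsilon>"
    using assms[of \<epsilon>] by (simp add: eventually_mono)
  then show "Limsup F (\<lambda>x. ereal (f x)) \<le> ereal c + ereal \<epsilon>" by (rule Limsup_bounded)
qed

lemma eventually_M2_div_le:
  fixes \<phi> :: "real \<Rightarrow> complex"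
  assumes D: "measure lebesgue D > 0" and \<phi>: "riemann_integrable_on \<phi> 0 1" and \<epsilon>: "\<epsilon> > 0"
  shows "\<forall>\<^sub>F q in inf sequentially (principal {q. ndiv q \<le> N}). M2 D \<phi> q / real q
           \<le> 2 * (real N)^2 * (integral {0..1} (\<lambda>x. (cmod (\<phi> x))^2) + \<epsilon>) / measure lebesgue D"
proof -
  obtain M where M: "\<forall>m\<ge>M. (\<Sum>k<m. (cmod (\<phi> (real k / real m)))^2) / real m
      \<le> integral {0..1} (\<lambda>x. (cmod (\<phi> x))^2) + \<epsilon>"
    using left_riemann_sum_norm_power2_le[OF \<phi> \<epsilon>] unfolding eventually_sequentially by blast
  have "M2 D \<phi> q / real q
      \<le> 2 * (real N)^2 * (integral {0..1} (\<lambda>x. (cmod (\<phi> x))^2) + \<epsilon>) / measure lebesgue D"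
    if q: "q \<ge> M * M + 1" and N: "ndiv q \<le> N" for q
  proof (rule M2_div_le[OF _ D N])
    show "q > 0" using q by simp
    fix m assume "q \<le> m * m"
    have "M \<le> m"
    proof (rule ccontr)
      assume "\<not> M \<le> m"
      then have "m * m \<le> M * M" by (intro mult_le_mono) auto
      with q \<open>q \<le> m * m\<close> show False by linarith
    qed
    with M show "(\<Sum>k<m. (cmod (\<phi> (real k / real m)))^2) / real m
        \<le> integral {0..1} (\<lambda>x. (cmod (\<phi> x))^2) + \<epsilon>" by blast
  qed
  then show ?thesis unfolding eventually_inf_principal eventually_sequentially by blast
qed

lemma Limsup_M2_div_le:
  fixes \<phi> :: "real \<Rightarrow> complex"
  assumes D: "measure lebesgue D > 0" and N: "N > 0" and \<phi>: "riemann_integrable_on \<phi> 0 1"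
  shows "Limsup (inf sequentially (principal {q. ndiv q \<le> N})) (\<lambda>q. ereal (M2 D \<phi> q / real q))
      \<le> ereal (2 * (real N)^2 / measure lebesgue D * integral {0..1} (\<lambda>x. (cmod (\<phi> x))^2))"
proof -
  define C where "C = 2 * (real N)^2"
  define J where "J = integral {0..1} (\<lambda>x. (cmod (\<phi> x))^2)"
  define \<mu> where "\<mu> = measure lebesgue D"
  have "C > 0" "\<mu> > 0" using D N by (simp_all add: C_def \<mu>_def)
  have "Limsup (inf sequentially (principal {q. ndiv q \<le> N})) (\<lambda>q. ereal (M2 D \<phi> q / real q))
      \<le> ereal (C / \<mu> * J)"
  proof (rule Limsup_le_if_eventually_le)
    fix \<epsilon> :: real assume "\<epsilon> > 0"
    then have "\<epsilon> * \<mu> / C > 0" using \<open>C > 0\<close> \<open>\<mu> > 0\<close> by simp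
    moreover have "C * (J + \<epsilon> * \<mu> / C) / \<mu> = C / \<mu> * J + \<epsilon>"
      using \<open>C > 0\<close> \<open>\<mu> > 0\<close> by (simp add: field_simps)
    ultimately show "\<forall>\<^sub>F q in inf sequentially (principal {q. ndiv q \<le> N}).
        M2 D \<phi> q / real q \<le> C / \<mu> * J + \<epsilon>"
      using eventually_M2_div_le[OF D \<phi>, of "\<epsilon> * \<mu> / C" N] by (simp add: C_def J_def \<mu>_def)
  qed
  then show ?thesis by (simp add: C_def J_def \<mu>_def)
qed

theorem lemma1p4:
  fixes D :: "real set" and N :: nat
  assumes "D \<subseteq> {0..<1}"
    and "frontier D \<in> null_sets lebesgue"
    and "measure lebesgue D > 0"
    and "N > 0"
  shows "\<exists>C>0. \<forall>\<phi> :: real \<Rightarrow> complex.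
           (\<forall>x. \<phi> (x + 1) = \<phi> x) \<and> riemann_integrable_on \<phi> 0 1 \<longrightarrow>
           Limsup (inf sequentially (principal {q. ndiv q \<le> N})) (\<lambda>q. ereal (M2 D \<phi> q / real q))
             \<le> ereal (C / measure lebesgue D * integral {0..1} (\<lambda>x. (cmod (\<phi> x))^2))"
proof (intro exI[of _ "2 * (real N)^2"] conjI allI impI)
  show "2 * (real N)^2 > 0" using \<open>N > 0\<close> by simp
  fix \<phi> :: "real \<Rightarrow> complex"
  assume "(\<forall>x. \<phi> (x + 1) = \<phi> x) \<and> riemann_integrable_on \<phi> 0 1"
  then show "Limsup (inf sequentially (principal {q. ndiv q \<le> N})) (\<lambda>q. ereal (M2 D \<phi> q / real q))
      \<le> ereal (2 * (real N)^2 / measure lebesgue D * integral {0..1} (\<lambda>x. (cmod (\<phi> x))^2))"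
    using Limsup_M2_div_le[OF assms(3,4)] by blast
qed

end
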